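(* Let $G$ be a connected finite simple graph on $n$ vertices, and let $m$ be the maximum multiplicity of the nonzero eigenvalues of the Laplacian matrix $L_G=D_G-A_G$. Then $\mathrm{mur}(G)\le n-m-1$.
   Context: For a finite simple undirected graph $G$ on vertices $v_1,\dots,v_n$, let $A_G$ be its $(0,1)$-adjacency matrix, $D_G=\mathrm{diag}(d_1,\dots,d_n)$ with $d_i$ the degree of $v_i$, $I$ the $n\times n$ identity matrix and $J$ the $n\times n$ all-ones matrix. A universal adjacency matrix of $G$ is any matrix $\alpha A_G+\beta I+\gamma J+\delta D_G$ with real scalars $\alpha,\beta,\gamma,\delta$ and $\alpha\neq 0$. The minimum universal rank $\mathrm{mur}(G)$ is the minimum rank over all universal adjacency matrices of $G$. *)

theory Defs
  imports "Jordan_Normal_Form.Jordan_Normal_Form" "Jordan_Normal_Form.DL_Rank"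
begin

definition simple_graph :: "nat \<Rightarrow> (nat \<Rightarrow> nat \<Rightarrow> bool) \<Rightarrow> bool" where
  "simple_graph n E \<longleftrightarrow>
     (\<forall>i j. E i j \<longrightarrow> i < n \<and> j < n) \<and> (\<forall>i j. E i j \<longrightarrow> E j i) \<and> (\<forall>i. \<not> E i i)"

definition connected_graph :: "nat \<Rightarrow> (nat \<Rightarrow> nat \<Rightarrow> bool) \<Rightarrow> bool" where
  "connected_graph n E \<longleftrightarrow> n \<ge> 1 \<and> (\<forall>i<n. \<forall>j<n. E\<^sup>*\<^sup>* i j)"

definition degree :: "nat \<Rightarrow> (nat \<Rightarrow> nat \<Rightarrow> bool) \<Rightarrow> nat \<Rightarrow> nat" where
  "degree n E i = card {j. j < n \<and> E i j}"

definition adj_mat :: "nat \<Rightarrow> (nat \<Rightarrow> nat \<Rightarrow> bool) \<Rightarrow> real mat" where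
  "adj_mat n E = mat n n (\<lambda>(i,j). if E i j then 1 else 0)"

definition deg_mat :: "nat \<Rightarrow> (nat \<Rightarrow> nat \<Rightarrow> bool) \<Rightarrow> real mat" where
  "deg_mat n E = mat n n (\<lambda>(i,j). if i = j then real (degree n E i) else 0)"

definition ones_mat :: "nat \<Rightarrow> real mat" where
  "ones_mat n = mat n n (\<lambda>_. 1)"

definition laplacian :: "nat \<Rightarrow> (nat \<Rightarrow> nat \<Rightarrow> bool) \<Rightarrow> real mat" where
  "laplacian n E = deg_mat n E - adj_mat n E"

definition universal_adj :: "nat \<Rightarrow> (nat \<Rightarrow> nat \<Rightarrow> bool) \<Rightarrow> real \<Rightarrow> real \<Rightarrow> real \<Rightarrow> real \<Rightarrow> real mat" where
  "universal_adj n E \<alpha> \<beta> \<gamma> \<delta> =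
     \<alpha> \<cdot>\<^sub>m adj_mat n E + \<beta> \<cdot>\<^sub>m 1\<^sub>m n + \<gamma> \<cdot>\<^sub>m ones_mat n + \<delta> \<cdot>\<^sub>m deg_mat n E"

definition mur :: "nat \<Rightarrow> (nat \<Rightarrow> nat \<Rightarrow> bool) \<Rightarrow> nat" where
  "mur n E = (LEAST r. \<exists>\<alpha> \<beta> \<gamma> \<delta>. \<alpha> \<noteq> 0 \<and> r = vec_space.rank n (universal_adj n E \<alpha> \<beta> \<gamma> \<delta>))"

definition eig_mult :: "real mat \<Rightarrow> real \<Rightarrow> nat" where
  "eig_mult A lam = Polynomial.order lam (char_poly A)"

definition max_nonzero_eig_mult :: "real mat \<Rightarrow> nat" where
  "max_nonzero_eig_mult A = Max {eig_mult A lam | lam. lam \<noteq> 0 \<and> eigenvalue A lam}"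

end

theory Submission
  imports Defs
    "Jordan_Normal_Form.Jordan_Normal_Form_Uniqueness"
    "Jordan_Normal_Form.Jordan_Normal_Form_Existence"
    "Jordan_Normal_Form.Spectral_Radius"
begin

(* Let t \<noteq> 0 be a Laplacian eigenvalue of maximal multiplicity m.  Since L is real symmetric,
   m = dim ker (L - t I).  Take the universal adjacency matrix
   U = D - A - t I + (t/n) J = (L - t I) + (t/n) J.  Because L 1 = 0 and L is symmetric, every
   v \<in> ker (L - t I) satisfies t (1 \<bullet> v) = 0, hence J v = 0 and U v = 0; moreover U 1 = 0
   while (L - t I) 1 = - t 1 \<noteq> 0.  So the nullity of U is at least m + 1 and
   mur G \<le> rank U \<le> n - m - 1. *)

lemma rank_plus_kernel_dim:
  fixes U :: "'a::field mat"
  assumes U: "U \<in> carrier_mat nr nc"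
  shows "vec_space.rank nr U + kernel_dim U = nc"
proof -
  interpret Vc: vec_space "TYPE('a)" nc .
  interpret Vr: vec_space "TYPE('a)" nr .
  interpret K: kernel nr nc U by (unfold_locales, rule U)
  interpret lm: linear_map class_ring Vc.V Vr.V "(*\<^sub>v) U"
    apply unfold_locales
    unfolding LinearCombinations.module_hom_def Pi_def
    using U by (auto simp: mult_add_distrib_mat_vec mult_mat_vec module_vec_simps)
  have im: "lm.imT = Vr.col_space U"
    unfolding Vr.col_space_eq[OF U] lm.im_def using U by auto
  have ker: "lm.kerT = mat_kernel U"
    unfolding lm.ker_def mat_kernel_def using U by auto
  show ?thesis
    using lm.rank_nullity[OF Vc.fin_dim] Vc.dim_is_n
    unfolding Vr.rank_def Vr.col_space_def[symmetric] im[symmetric] K.kernel_dim ker[symmetric]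
    by simp
qed

lemma mat_kernel_submodule:
  fixes A :: "'a::field mat"
  assumes A: "A \<in> carrier_mat nr nc"
  shows "submodule class_ring (mat_kernel A) (module_vec TYPE('a) nc)"
proof -
  interpret vec_space "TYPE('a)" nc .
  show ?thesis unfolding submodule_def using A module_axioms
    by (auto simp: mat_kernel_def mult_add_distrib_mat_vec mult_mat_vec class_ring_simps)
qed

lemma kernel_dim_less:
  fixes A B :: "'a::field mat"
  assumes A: "A \<in> carrier_mat nrA nc" and B: "B \<in> carrier_mat nrB nc"
    and sub: "mat_kernel A \<subseteq> mat_kernel B"
    and w: "w \<in> mat_kernel B" "w \<notin> mat_kernel A"
  shows "kernel_dim A < kernel_dim B"
proof -
  interpret V: vec_space "TYPE('a)" nc .
  interpret KA: kernel nrA nc A by (unfold_locales, rule A)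
  interpret KB: kernel nrB nc B by (unfold_locales, rule B)
  obtain S where fin: "finite S" and basis: "KA.basis S" using kernel_basis_exists[OF A] by auto
  obtain T where "finite T" "KB.basis T" using kernel_basis_exists[OF B] by auto
  then have fdB: "KB.Ker.fin_dim" unfolding KB.Ker.fin_dim_def KB.Ker.basis_def by auto
  have SA: "S \<subseteq> mat_kernel A" and indA: "KA.lin_indpt S" and spanA: "KA.span S = mat_kernel A"
    using basis unfolding KA.Ker.basis_def by auto
  have SB: "S \<subseteq> mat_kernel B" using SA sub by auto
  note smA = mat_kernel_submodule[OF A] and smB = mat_kernel_submodule[OF B]
  have indB: "\<not> KB.lin_dep S"
    using indA V.span_li_not_depend(2)[OF SA smA] V.span_li_not_depend(2)[OF SB smB] by simp
  have spanB: "KB.span S = mat_kernel A"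
    using spanA V.span_li_not_depend(1)[OF SB smB] V.span_li_not_depend(1)[OF SA smA] by simp
  have "w \<notin> S" using w SA by auto
  then have "\<not> KB.lin_dep (insert w S)"
    using KB.Ker.lin_dep_iff_in_span[OF SB indB w(1)] w spanB by auto
  then have "card (insert w S) \<le> KB.dim"
    using KB.Ker.li_le_dim(2)[OF fdB] SB w(1) by auto
  then show ?thesis
    using KA.Ker.dim_basis[OF fin basis] fin \<open>w \<notin> S\<close> by simp
qed

lemma add_ones_mat_mult_vec:
  assumes "B \<in> carrier_mat n n" "v \<in> carrier_vec n"
  shows "(B + c \<cdot>\<^sub>m ones_mat n) *\<^sub>v v = B *\<^sub>v v + (c * (vec n (\<lambda>_. 1) \<bullet> v)) \<cdot>\<^sub>v vec n (\<lambda>_. 1)"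
  using assms
  by (intro eq_vecI) (auto simp: ones_mat_def scalar_prod_def sum.distrib sum_distrib_left algebra_simps)

lemma kernel_dim_less_add_ones_mat:
  fixes B :: "real mat"
  assumes B: "B \<in> carrier_mat n n" and sym: "transpose_mat B = B" and n: "n > 0"
    and c: "c \<noteq> 0" and row_sums: "B *\<^sub>v vec n (\<lambda>_. 1) = (- c * real n) \<cdot>\<^sub>v vec n (\<lambda>_. 1)"
  shows "kernel_dim B < kernel_dim (B + c \<cdot>\<^sub>m ones_mat n)"
proof -
  let ?e = "vec n (\<lambda>_. 1) :: real vec"
  let ?U = "B + c \<cdot>\<^sub>m ones_mat n"
  have U: "?U \<in> carrier_mat n n" using B by (auto simp: ones_mat_def)
  have ones: "?e \<in> carrier_vec n" by simp
  have "?e \<bullet> ?e = real n" by (simp add: scalar_prod_def)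
  then have "?U *\<^sub>v ?e = 0\<^sub>v n"
    using B row_sums by (auto simp: add_ones_mat_mult_vec)
  then have ones_U: "?e \<in> mat_kernel ?U" using U by (auto intro: mat_kernelI)
  have "B *\<^sub>v ?e \<noteq> 0\<^sub>v n"
  proof
    assume "B *\<^sub>v ?e = 0\<^sub>v n"
    then have "(B *\<^sub>v ?e) $ 0 = 0" using n by simp
    then show False using row_sums n c by simp
  qed
  then have ones_B: "?e \<notin> mat_kernel B" using B by (auto dest: mat_kernelD)
  have "v \<in> mat_kernel ?U" if v: "v \<in> mat_kernel B" for v
  proof -
    have vc: "v \<in> carrier_vec n" and Bv: "B *\<^sub>v v = 0\<^sub>v n" using mat_kernelD[OF B v] by auto
    \<comment> \<open>By symmetry the column sums of \<open>B\<close> are \<open>- c n \<noteq> 0\<close>, so \<open>B v = 0\<close> forces \<open>\<Sum>v = 0\<close>.\<close>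
    have "(- c * real n) * (?e \<bullet> v) = (transpose_mat B *\<^sub>v ?e) \<bullet> v"
      using row_sums sym vc by simp
    also have "\<dots> = ?e \<bullet> (B *\<^sub>v v)" by (rule transpose_vec_mult_scalar[OF B vc ones])
    also have "\<dots> = 0" using Bv by simp
    finally have "?e \<bullet> v = 0" using c n by simp
    then have "?U *\<^sub>v v = 0\<^sub>v n" using B vc Bv by (intro eq_vecI) (simp_all add: add_ones_mat_mult_vec)
    then show ?thesis using U vc by (auto intro: mat_kernelI)
  qed
  then show ?thesis using kernel_dim_less[OF B U _ ones_U ones_B] by blast
qed

lemma Im_eigenvalue_real_symmetric:
  fixes A :: "real mat"
  assumes A: "A \<in> carrier_mat n n" and sym: "transpose_mat A = A"
    and ev: "eigenvalue (of_real_hom.mat_hom A) c"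
  shows "Im c = 0"
proof -
  let ?A = "of_real_hom.mat_hom A :: complex mat"
  have Ac: "?A \<in> carrier_mat n n" using A by auto
  obtain v where v: "v \<in> carrier_vec n" "v \<noteq> 0\<^sub>v n" "?A *\<^sub>v v = c \<cdot>\<^sub>v v"
    using ev A unfolding eigenvalue_def eigenvector_def by auto
  have symc: "transpose_mat ?A = ?A" using sym by (metis map_mat_transpose)
  have cj: "?A *\<^sub>v conjugate v = conjugate (?A *\<^sub>v v)"
    using A v(1) by (intro eq_vecI) (auto simp: scalar_prod_def conjugate_vec_def sum_conjugate)
  have "(transpose_mat ?A *\<^sub>v conjugate v) \<bullet> v = conjugate v \<bullet> (?A *\<^sub>v v)"
    by (rule transpose_vec_mult_scalar[OF Ac v(1)]) (use v in auto)
  then have "conjugate c * (conjugate v \<bullet> v) = c * (conjugate v \<bullet> v)"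
    unfolding symc cj v(3) conjugate_smult_vec using v(1) by simp
  moreover have "conjugate v \<bullet> v \<noteq> 0"
    using conjugate_square_greater_0_vec[OF v(1)] v(2) conjugate_vec_sprod_comm[OF v(1) v(1)] by auto
  ultimately have "conjugate c = c" by simp
  then show ?thesis by (simp add: complex_eq_iff)
qed

lemma char_poly_real_symmetric_splits:
  fixes A :: "real mat"
  assumes A: "A \<in> carrier_mat n n" and sym: "transpose_mat A = A"
  shows "\<exists>as. char_poly A = (\<Prod>a\<leftarrow>as. [:- a, 1:])"
proof -
  let ?A = "of_real_hom.mat_hom A :: complex mat"
  have Ac: "?A \<in> carrier_mat n n" using A by auto
  obtain cs where cs: "char_poly ?A = (\<Prod>c\<leftarrow>cs. [:- c, 1:])"
    using char_poly_factorized[OF Ac] by auto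
  have real: "complex_of_real (Re c) = c" if "c \<in> set cs" for c
  proof -
    have "poly (char_poly ?A) c = 0" unfolding cs poly_prod_list using that
      by (induct cs) auto
    then have "eigenvalue ?A c" using eigenvalue_root_char_poly[OF Ac] by auto
    then show ?thesis using Im_eigenvalue_real_symmetric[OF A sym] by (simp add: complex_eq_iff)
  qed
  interpret map_poly_comm_ring_hom complex_of_real ..
  interpret inj: map_poly_inj_zero_hom complex_of_real ..
  have hom: "map_poly complex_of_real (\<Prod>a\<leftarrow>as. [:- a, 1:]) = (\<Prod>a\<leftarrow>as. [:- complex_of_real a, 1:])"
    for as by (simp add: hom_prod_list o_def)
  have Re_cs: "map (\<lambda>a. [:- complex_of_real a, 1:]) (map Re cs) = map (\<lambda>c. [:- c, 1:]) cs"
    unfolding map_map o_def using real by (intro map_cong) auto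
  have "map_poly complex_of_real (char_poly A) = map_poly complex_of_real (\<Prod>a\<leftarrow>map Re cs. [:- a, 1:])"
    unfolding of_real_hom.char_poly_hom[OF A, symmetric] cs hom by (simp only: Re_cs)
  then have "char_poly A = (\<Prod>a\<leftarrow>map Re cs. [:- a, 1:])"
    by (rule inj.injectivity)
  then show ?thesis by blast
qed

lemma transpose_char_matrix:
  assumes "A \<in> carrier_mat n n" and "transpose_mat A = A"
  shows "transpose_mat (char_matrix A t) = char_matrix A t"
  using assms unfolding char_matrix_def by (auto simp: transpose_add)

lemma real_symmetric_mult_mult_vec_eq_0:
  fixes C :: "real mat"
  assumes C: "C \<in> carrier_mat n n" and sym: "transpose_mat C = C"
    and v: "v \<in> carrier_vec n" and "C *\<^sub>v (C *\<^sub>v v) = 0\<^sub>v n"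
  shows "C *\<^sub>v v = 0\<^sub>v n"
proof -
  have Cv: "C *\<^sub>v v \<in> carrier_vec n" using C v by auto
  have "(C *\<^sub>v v) \<bullet> (C *\<^sub>v v) = (transpose_mat C *\<^sub>v (C *\<^sub>v v)) \<bullet> v"
    by (rule transpose_vec_mult_scalar[OF C v Cv, symmetric])
  also have "\<dots> = 0" using sym assms(4) v by simp
  finally show ?thesis using conjugate_square_eq_0_vec[OF Cv] by simp
qed

lemma mat_kernel_power_real_symmetric:
  fixes C :: "real mat"
  assumes C: "C \<in> carrier_mat n n" and sym: "transpose_mat C = C"
  shows "mat_kernel (C ^\<^sub>m Suc k) = mat_kernel C"
proof (induct k)
  case (Suc k)
  have Ck: "C ^\<^sub>m Suc k \<in> carrier_mat n n" using C by auto
  then have CSk: "C ^\<^sub>m Suc (Suc k) \<in> carrier_mat n n" using C by auto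
  show ?case
    unfolding mat_kernel[OF CSk] mat_kernel[OF C]
  proof (intro Collect_cong conj_cong refl)
    fix v :: "real vec" assume v: "v \<in> carrier_vec n"
    then have Cv: "C *\<^sub>v v \<in> carrier_vec n" using C by auto
    have "C ^\<^sub>m Suc (Suc k) *\<^sub>v v = C ^\<^sub>m Suc k *\<^sub>v (C *\<^sub>v v)"
      using Ck C v by simp
    also have "\<dots> = 0\<^sub>v n \<longleftrightarrow> C *\<^sub>v (C *\<^sub>v v) = 0\<^sub>v n"
      using Suc Cv unfolding mat_kernel[OF Ck] mat_kernel[OF C] by blast
    also have "\<dots> \<longleftrightarrow> C *\<^sub>v v = 0\<^sub>v n"
      using real_symmetric_mult_mult_vec_eq_0[OF C sym v] C by auto
    finally show "C ^\<^sub>m Suc (Suc k) *\<^sub>v v = 0\<^sub>v n \<longleftrightarrow> C *\<^sub>v v = 0\<^sub>v n" .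
  qed
qed simp

lemma kernel_dim_char_matrix_real_symmetric:
  fixes A :: "real mat"
  assumes A: "A \<in> carrier_mat n n" and sym: "transpose_mat A = A"
  shows "kernel_dim (char_matrix A t) = eig_mult A t"
proof -
  let ?m = "eig_mult A t"
  let ?C = "char_matrix A t"
  \<comment> \<open>The Jordan blocks for \<open>t\<close> have total size \<open>m\<close>, so \<open>(A - t I)\<^bsup>m+1\<^esup>\<close> has an
    \<open>m\<close>-dimensional kernel; by symmetry this is the kernel of \<open>A - t I\<close> itself.\<close>
  obtain n_as where jnf: "jordan_nf A n_as"
    using char_poly_real_symmetric_splits[OF A sym] jordan_nf_exists[OF A] by blast
  define sizes where "sizes = map fst [(n, e)\<leftarrow>n_as. e = t]"
  have m: "?m = sum_list sizes"
    unfolding eig_mult_def jordan_nf_order[OF jnf] sizes_def by (induct n_as) auto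
  then have "map (min (Suc ?m)) sizes = sizes"
    by (intro map_idI) (auto dest: member_le_sum_list)
  then have "dim_gen_eigenspace A t (Suc ?m) = ?m"
    unfolding dim_gen_eigenspace[OF jnf] sizes_def[symmetric] m by simp
  moreover have "?C \<in> carrier_mat n n" using A by auto
  ultimately show ?thesis
    unfolding dim_gen_eigenspace_def kernel_dim_def
    using mat_kernel_power_real_symmetric[of ?C n ?m] transpose_char_matrix[OF A sym] by simp
qed

lemma laplacian_carrier: "laplacian n E \<in> carrier_mat n n"
  unfolding laplacian_def deg_mat_def adj_mat_def by auto

lemma transpose_laplacian:
  assumes "simple_graph n E"
  shows "transpose_mat (laplacian n E) = laplacian n E"
  using assms unfolding simple_graph_def
  by (intro eq_matI) (auto simp: laplacian_def deg_mat_def adj_mat_def)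

lemma laplacian_mult_ones: "laplacian n E *\<^sub>v vec n (\<lambda>_. 1) = 0\<^sub>v n"
proof (rule eq_vecI)
  fix i assume "i < dim_vec (0\<^sub>v n :: real vec)"
  then have i: "i < n" by simp
  have "real (degree n E i) = (\<Sum>j\<in>{j\<in>{..<n}. E i j}. 1)" by (simp add: degree_def)
  also have "\<dots> = (\<Sum>j<n. if E i j then 1 else 0)" by (rule sum.inter_filter) simp
  finally have "(\<Sum>j<n. if E i j then 1 else 0) = real (degree n E i)" ..
  moreover have "(laplacian n E *\<^sub>v vec n (\<lambda>_. 1)) $ i
      = (\<Sum>j<n. if i = j then real (degree n E i) else 0) - (\<Sum>j<n. if E i j then 1 else 0)"
    using i by (simp add: laplacian_def deg_mat_def adj_mat_def scalar_prod_def
        sum_subtractf lessThan_atLeast0)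
  ultimately show "(laplacian n E *\<^sub>v vec n (\<lambda>_. 1)) $ i = 0\<^sub>v n $ i"
    using i by simp
qed (simp add: laplacian_def deg_mat_def adj_mat_def)

lemma universal_adj_carrier: "universal_adj n E \<alpha> \<beta> \<gamma> \<delta> \<in> carrier_mat n n"
  unfolding universal_adj_def adj_mat_def deg_mat_def ones_mat_def by auto

lemma universal_adj_laplacian:
  "universal_adj n E (-1) \<beta> \<gamma> 1 = laplacian n E + \<beta> \<cdot>\<^sub>m 1\<^sub>m n + \<gamma> \<cdot>\<^sub>m ones_mat n"
  by (intro eq_matI)
    (auto simp: universal_adj_def laplacian_def deg_mat_def adj_mat_def ones_mat_def)

lemma mur_le_rank:
  assumes "\<alpha> \<noteq> 0"
  shows "mur n E \<le> vec_space.rank n (universal_adj n E \<alpha> \<beta> \<gamma> \<delta>)"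
  unfolding mur_def using assms by (intro Least_le) blast

lemma max_nonzero_eig_mult_attained:
  fixes A :: "real mat"
  assumes A: "A \<in> carrier_mat n n" and ex: "\<exists>t. t \<noteq> 0 \<and> eigenvalue A t"
  shows "\<exists>t. t \<noteq> 0 \<and> eigenvalue A t \<and> max_nonzero_eig_mult A = eig_mult A t"
proof -
  let ?S = "{eig_mult A t | t. t \<noteq> 0 \<and> eigenvalue A t}"
  have "?S \<subseteq> eig_mult A ` spectrum A" by (auto simp: spectrum_def)
  then have "finite ?S" using card_finite_spectrum(1)[OF A] finite_surj by blast
  moreover have "?S \<noteq> {}" using ex by auto
  ultimately have "max_nonzero_eig_mult A \<in> ?S"
    unfolding max_nonzero_eig_mult_def by (rule Max_in)
  then show ?thesis by auto
qed

theorem theorem4: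
  fixes n :: nat and E :: "nat \<Rightarrow> nat \<Rightarrow> bool"
  assumes "simple_graph n E" and "connected_graph n E"
    and "\<exists>lam. lam \<noteq> 0 \<and> eigenvalue (laplacian n E) lam"
  shows "int (mur n E) \<le> int n - int (max_nonzero_eig_mult (laplacian n E)) - 1"
proof -
  let ?L = "laplacian n E"
  have L: "?L \<in> carrier_mat n n" by (rule laplacian_carrier)
  \<comment> \<open>Connectedness is used only to exclude the empty graph.\<close>
  have n: "n > 0" using assms(2) unfolding connected_graph_def by simp
  obtain t where t: "t \<noteq> 0" and mult: "max_nonzero_eig_mult ?L = eig_mult ?L t"
    using max_nonzero_eig_mult_attained[OF L assms(3)] by blast
  let ?U = "universal_adj n E (-1) (-t) (t / real n) 1"
  define B where "B = char_matrix ?L t"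
  have B: "B \<in> carrier_mat n n" using L by (simp add: B_def)
  have L_sym: "transpose_mat ?L = ?L" by (rule transpose_laplacian[OF assms(1)])
  then have sym: "transpose_mat B = B" unfolding B_def by (rule transpose_char_matrix[OF L])
  have "B *\<^sub>v vec n (\<lambda>_. 1) = (- (t / real n) * real n) \<cdot>\<^sub>v vec n (\<lambda>_. 1)"
    using n L laplacian_mult_ones[of n E]
    by (intro eq_vecI) (auto simp: B_def char_matrix_def add_mult_distrib_mat_vec)
  then have "kernel_dim B < kernel_dim (B + (t / real n) \<cdot>\<^sub>m ones_mat n)"
    using kernel_dim_less_add_ones_mat[OF B sym n] t n by simp
  also have "B + (t / real n) \<cdot>\<^sub>m ones_mat n = ?U"
    using L by (simp add: B_def char_matrix_def universal_adj_laplacian)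
  finally have "kernel_dim B < kernel_dim ?U" .
  moreover have "kernel_dim B = eig_mult ?L t"
    unfolding B_def by (rule kernel_dim_char_matrix_real_symmetric[OF L L_sym])
  moreover have "vec_space.rank n ?U + kernel_dim ?U = n"
    by (rule rank_plus_kernel_dim[OF universal_adj_carrier])
  moreover have "mur n E \<le> vec_space.rank n ?U" by (rule mur_le_rank) simp
  ultimately show ?thesis using mult by linarith
qed

end
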